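(* Let $X(0),X(1),\dots$ be i.i.d. real random variables with $|X(0)|\le D$ a.s. Let $q_1,\dots,q_\ell$ be nonnegative, strictly increasing, integer-valued functions on the nonnegative integers such that for some $\gamma\in(0,1)$ and $n_0\in\mathbb Z$, $q_{j+1}([n^\gamma])>q_j(n)$ for all $n\ge n_0$ and $j=1,\dots,\ell-1$. Let $S_N=\sum_{n=0}^NX(q_1(n))\cdots X(q_\ell(n))$ and $M_N(t)=E\exp(tS_N)$. Then for every real $t$ the limit $\eta(t)=\lim_{N\to\infty}\frac1N\log M_N(t)$ exists and equals $\log\sum_{k=0}^\infty\frac{t^k}{k!}\big(EX^k(0)\big)^\ell$; $\eta$ is differentiable; and with $\Lambda(x)=\sup_t(tx-\eta(t))$ and $Q_N(U)=\frac1N\log P\{\frac1NS_N\in U\}$ one has $\limsup_{N\to\infty}Q_N(F)\le-\inf_{x\in F}\Lambda(x)$ for every closed $F\subset\mathbb R$ and $\liminf_{N\to\infty}Q_N(G)\ge-\inf_{x\in G}\Lambda(x)$ for every open $G\subset\mathbb R$.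
   Context: $[\cdot]$ denotes the integer part. *)

theory Defs
  imports "HOL-Probability.Probability"
begin

definition S_sum :: "(nat \<Rightarrow> nat \<Rightarrow> nat) \<Rightarrow> nat \<Rightarrow> (nat \<Rightarrow> 'a \<Rightarrow> real) \<Rightarrow> nat \<Rightarrow> 'a \<Rightarrow> real" where
  "S_sum q l X N \<omega> = (\<Sum>n=0..N. \<Prod>j=1..l. X (q j n) \<omega>)"

definition mgf_S :: "'a measure \<Rightarrow> (nat \<Rightarrow> nat \<Rightarrow> nat) \<Rightarrow> nat \<Rightarrow> (nat \<Rightarrow> 'a \<Rightarrow> real) \<Rightarrow> nat \<Rightarrow> real \<Rightarrow> real" where
  "mgf_S M q l X N t = (\<integral>\<omega>. exp (t * S_sum q l X N \<omega>) \<partial>M)"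

definition eta_fun :: "'a measure \<Rightarrow> (nat \<Rightarrow> 'a \<Rightarrow> real) \<Rightarrow> nat \<Rightarrow> real \<Rightarrow> real" where
  "eta_fun M X l t = ln (\<Sum>k. t ^ k / fact k * (\<integral>\<omega>. X 0 \<omega> ^ k \<partial>M) ^ l)"

definition Lambda_fun :: "(real \<Rightarrow> real) \<Rightarrow> real \<Rightarrow> ereal" where
  "Lambda_fun \<eta> x = (SUP t. ereal (t * x - \<eta> t))"

definition Q_fun :: "'a measure \<Rightarrow> (nat \<Rightarrow> 'a \<Rightarrow> real) \<Rightarrow> nat \<Rightarrow> real set \<Rightarrow> ereal" where
  "Q_fun M S N U =
     (let p = measure M {\<omega> \<in> space M. S N \<omega> / real N \<in> U}
      in if p = 0 then - \<infinity> else ereal (ln p / real N))"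

end

theory Submission
  imports Defs
begin

(* The separation hypothesis q_(j+1)(floor(n^gamma)) > q_j(n) makes the index set
   {q_1 n, ..., q_l n} of every n in [N^gamma + n0, N] consist of l distinct indices, disjoint from
   the index set of every other such n.  Only O(N^gamma) summands are "entangled"; the others are
   independent copies of X(1)...X(l), whose moment generating function is
   sum_k t^k/k! (E X^k)^l.  Since every summand is bounded by D^l, the entangled ones change
   log M_N(t) by O(N^gamma) = o(N), which gives the limit eta(t).  The series is entire and
   positive, so eta is differentiable, and Jensen's inequality gives eta(t) >= t (E X)^l.
   The two large deviation bounds then follow from a one-dimensional Gartner-Ellis theorem:
   Chernoff bounds on the two half-lines beyond the mean for closed sets, and for open sets
   exponential tilting at an exposed slope obtained by maximising t x - eta t - delta t^2. *)

lemma Lambda_fun_ge: "ereal (t * x - \<eta> t) \<le> Lambda_fun \<eta> x"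
  unfolding Lambda_fun_def by (rule SUP_upper) simp

lemma Lambda_fun_nonneg: "\<eta> 0 = 0 \<Longrightarrow> 0 \<le> Lambda_fun \<eta> x"
  using Lambda_fun_ge[of 0 x \<eta>] by (simp add: zero_ereal_def)

lemma Lambda_fun_reflect: "Lambda_fun (\<lambda>t. \<eta> (- t)) (- x) = Lambda_fun \<eta> x"
proof -
  define g where "g t = ereal (t * x - \<eta> t)" for t
  have "(\<Squnion>t. g (- t)) = \<Squnion> (g ` range uminus)"
    by (simp only: image_image)
  then show ?thesis by (simp add: Lambda_fun_def g_def)
qed

lemma limsup_le_uminus:
  fixes f :: "nat \<Rightarrow> ereal"
  assumes "\<And>c. ereal c < L \<Longrightarrow> eventually (\<lambda>N. f N \<le> ereal (- c)) sequentially"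
  shows "limsup f \<le> - L"
proof (rule ccontr)
  assume "\<not> limsup f \<le> - L"
  then have "- limsup f < L" by (simp add: ereal_uminus_less_reorder not_le)
  then obtain c where c: "- limsup f < ereal c" "ereal c < L"
    using ereal_dense2 by blast
  have "limsup f \<le> ereal (- c)"
    using assms[OF c(2)] by (intro Limsup_bounded) auto
  then show False using c(1) by (simp add: ereal_uminus_less_reorder)
qed

lemma liminf_ge:
  fixes f :: "nat \<Rightarrow> ereal"
  assumes "\<And>c. ereal c < L \<Longrightarrow> eventually (\<lambda>N. ereal c \<le> f N) sequentially"
  shows "L \<le> liminf f"
proof (rule ccontr)
  assume "\<not> L \<le> liminf f"
  then have "liminf f < L" by simp
  then obtain c where c: "liminf f < ereal c" "ereal c < L"
    using ereal_dense2 by blast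
  have "ereal c \<le> liminf f"
    using assms[OF c(2)] by (intro Liminf_bounded) auto
  then show False using c(1) by simp
qed

lemma Q_fun_le:
  assumes "0 < N" and "measure M {\<omega> \<in> space M. S N \<omega> / real N \<in> U} \<le> exp (- real N * c)"
  shows "Q_fun M S N U \<le> ereal (- c)"
proof -
  define p where "p = measure M {\<omega> \<in> space M. S N \<omega> / real N \<in> U}"
  show ?thesis
  proof (cases "p = 0")
    case False
    then have "0 < p" using measure_nonneg[of M] by (simp add: p_def order_less_le)
    then have "ln p \<le> - real N * c"
      using assms(2) by (subst ln_exp[symmetric]) (simp add: p_def del: ln_exp)
    then have "ln p / real N \<le> - c"
      using assms(1) by (simp add: divide_le_eq mult.commute)
    moreover have "Q_fun M S N U = ereal (ln p / real N)"
      using False by (simp add: Q_fun_def p_def[symmetric])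
    ultimately show ?thesis by (simp only: ereal_less_eq)
  qed (simp add: Q_fun_def p_def[symmetric])
qed

lemma Q_fun_ge:
  assumes "0 < N" and "0 < a" and "a * exp (real N * c) \<le> measure M {\<omega> \<in> space M. S N \<omega> / real N \<in> U}"
  shows "ereal (c + ln a / real N) \<le> Q_fun M S N U"
proof -
  define p where "p = measure M {\<omega> \<in> space M. S N \<omega> / real N \<in> U}"
  have pos: "0 < a * exp (real N * c)" using assms(2) by simp
  then have "0 < p" using assms(3) by (simp add: p_def)
  have "ln a + real N * c \<le> ln p"
    using ln_mono[OF assms(3) pos] assms(2) by (simp add: p_def ln_mult)
  then have "(ln a + real N * c) / real N \<le> ln p / real N"
    by (rule divide_right_mono) simp
  moreover have "(ln a + real N * c) / real N = c + ln a / real N"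
    using assms(1) by (simp add: field_simps)
  ultimately have "c + ln a / real N \<le> ln p / real N" by simp
  moreover have "Q_fun M S N U = ereal (ln p / real N)"
    using \<open>0 < p\<close> by (simp add: Q_fun_def p_def[symmetric])
  ultimately show ?thesis by (simp only: ereal_less_eq)
qed

lemma eventually_real_gt: "eventually (\<lambda>N. K < real N) sequentially"
proof -
  obtain n where "K < real n" using reals_Archimedean2 by blast
  then show ?thesis unfolding eventually_sequentially
    by (intro exI[of _ n]) (auto intro: less_le_trans)
qed

lemma derivative_secants:
  fixes \<eta> :: "real \<Rightarrow> real"
  assumes "(\<eta> has_real_derivative y) (at t0)" and "0 < r"
  obtains s where "0 < s" and "\<eta> (t0 + s) - s * (y + r) < \<eta> t0 - s * r / 2"
    and "\<eta> (t0 - s) + s * (y - r) < \<eta> t0 - s * r / 2"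
proof -
  have "(\<lambda>h. (\<eta> (t0 + h) - \<eta> t0) / h) \<midarrow>0\<rightarrow> y" using assms(1) by (simp add: DERIV_def)
  from LIM_D[OF this, of "r / 2"] obtain d where "0 < d"
    and close: "\<And>h. h \<noteq> 0 \<Longrightarrow> \<bar>h\<bar> < d \<Longrightarrow> \<bar>(\<eta> (t0 + h) - \<eta> t0) / h - y\<bar> < r / 2"
    using assms(2) by auto
  define s where "s = d / 2"
  have "0 < s" "s < d" using \<open>0 < d\<close> by (auto simp: s_def)
  have "\<bar>(\<eta> (t0 + s) - \<eta> t0) / s - y\<bar> < r / 2" using close[of s] \<open>0 < s\<close> \<open>s < d\<close> by auto
  then have "(\<eta> (t0 + s) - \<eta> t0) / s < y + r / 2"
    using abs_less_iff[of "(\<eta> (t0 + s) - \<eta> t0) / s - y" "r / 2"] by linarith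
  then have "\<eta> (t0 + s) - \<eta> t0 < s * (y + r / 2)"
    using \<open>0 < s\<close> by (simp add: pos_divide_less_eq mult.commute)
  moreover have "\<bar>(\<eta> (t0 + - s) - \<eta> t0) / - s - y\<bar> < r / 2"
    using close[of "- s"] \<open>0 < s\<close> \<open>s < d\<close> by auto
  then have "y - r / 2 < (\<eta> (t0 + - s) - \<eta> t0) / - s"
    using abs_less_iff[of "(\<eta> (t0 + - s) - \<eta> t0) / - s - y" "r / 2"] by linarith
  then have "s * (y - r / 2) < \<eta> t0 - \<eta> (t0 - s)"
    using \<open>0 < s\<close> by (simp add: divide_simps mult.commute split: if_splits)
  ultimately show ?thesis using \<open>0 < s\<close> by (intro that[of s]) (auto simp: algebra_simps)
qed

(* Pointwise splitting of exp(t x) according to whether x/n lies in a window around y, below it or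
   above it; integrating it bounds M_N(t) by the window probability plus two shifted tails. *)
lemma exp_window_split:
  fixes x n s r t y :: real
  assumes "0 < n" and "0 < s"
  shows "exp (t * x) \<le> indicator {y - r<..<y + r} (x / n) * exp (n * (t * y + \<bar>t\<bar> * r))
           + exp (- (s * n) * (y + r)) * exp ((t + s) * x) + exp ((s * n) * (y - r)) * exp ((t - s) * x)"
    (is "_ \<le> ?window + ?right + ?left")
proof -
  have "0 \<le> ?window" "0 \<le> ?right" "0 \<le> ?left" by auto
  consider "x / n \<in> {y - r<..<y + r}" | "y + r \<le> x / n" | "x / n \<le> y - r" by fastforce
  then show ?thesis
  proof cases
    case 1
    then have "\<bar>x / n - y\<bar> \<le> r" by auto
    then have "t * (x / n - y) \<le> \<bar>t\<bar> * r"
      by (metis abs_ge_self abs_mult abs_ge_zero mult_left_mono order_trans)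
    then have "n * (t * (x / n - y)) \<le> n * (\<bar>t\<bar> * r)" using \<open>0 < n\<close> by (intro mult_left_mono) auto
    then have "exp (t * x) \<le> exp (n * (t * y + \<bar>t\<bar> * r))" using \<open>0 < n\<close> by (simp add: algebra_simps)
    moreover have "?window = exp (n * (t * y + \<bar>t\<bar> * r))" using 1 by simp
    ultimately show ?thesis using \<open>0 \<le> ?right\<close> \<open>0 \<le> ?left\<close> by linarith
  next
    case 2
    then have "n * (y + r) \<le> x" using assms by (simp add: field_simps)
    then have "0 \<le> s * (x - n * (y + r))" using assms by simp
    then have "exp (t * x) \<le> ?right" by (simp add: exp_add[symmetric] algebra_simps)
    with \<open>0 \<le> ?window\<close> \<open>0 \<le> ?left\<close> show ?thesis by linarith
  next
    case 3
    then have "x \<le> n * (y - r)" using assms by (simp add: field_simps)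
    then have "0 \<le> s * (n * (y - r) - x)" using assms by simp
    then have "exp (t * x) \<le> ?left" by (simp add: exp_add[symmetric] algebra_simps)
    with \<open>0 \<le> ?window\<close> \<open>0 \<le> ?right\<close> show ?thesis by linarith
  qed
qed

lemma exp_gap_quarter:
  fixes a \<delta> e :: real
  assumes "0 < \<delta>" and "e \<le> \<delta> / 8" and "4 * ln 4 / \<delta> < real N"
  shows "exp (real N * (a - \<delta> / 2 + e)) \<le> exp (real N * (a - e)) / 4"
proof -
  have "ln 4 \<le> real N * (\<delta> / 4)" using assms(1,3) by (simp add: field_simps)
  also have "\<dots> \<le> real N * (\<delta> / 2 - 2 * e)" using assms(2) by (intro mult_left_mono) linarith+
  finally have "real N * (2 * e - \<delta> / 2) \<le> - ln 4" by (simp add: algebra_simps)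
  then have "exp (real N * (2 * e - \<delta> / 2)) \<le> 1 / 4"
    using exp_mono[of "real N * (2 * e - \<delta> / 2)" "- ln 4"] by (simp add: exp_minus)
  moreover have "exp (real N * (a - \<delta> / 2 + e)) = exp (real N * (a - e)) * exp (real N * (2 * e - \<delta> / 2))"
    unfolding mult_exp_exp by (simp add: algebra_simps)
  ultimately show ?thesis by simp
qed

lemma interior_maximum:
  fixes g :: "real \<Rightarrow> real"
  assumes "continuous_on {-R..R} g" and "0 < R" and outside: "\<And>t. R \<le> \<bar>t\<bar> \<Longrightarrow> g t < g 0"
  obtains t0 where "\<bar>t0\<bar> < R" and "g 0 \<le> g t0" and "\<And>t. \<bar>t0 - t\<bar> < R - \<bar>t0\<bar> \<Longrightarrow> g t \<le> g t0"
proof -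
  have "{-R..R} \<noteq> {}" using \<open>0 < R\<close> by simp
  then obtain t0 where max: "\<And>t. t \<in> {-R..R} \<Longrightarrow> g t \<le> g t0"
    using continuous_attains_sup[OF compact_Icc _ assms(1)] by blast
  have "g 0 \<le> g t0" using max[of 0] \<open>0 < R\<close> by simp
  moreover have "\<bar>t0\<bar> < R"
  proof (rule ccontr)
    assume "\<not> \<bar>t0\<bar> < R"
    then show False using outside[of t0] \<open>g 0 \<le> g t0\<close> by simp
  qed
  moreover have "g t \<le> g t0" if "\<bar>t0 - t\<bar> < R - \<bar>t0\<bar>" for t
    using that by (intro max) auto
  ultimately show ?thesis using that by blast
qed

(* Exposed slopes near x: if t x - eta t <= L for all t, the maximiser t0 of the penalised function
   t x - eta t - delta t^2 has eta'(t0) within r of x, and tilting at t0 costs at most L. *)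
lemma exposed_slope_near:
  fixes \<eta> :: "real \<Rightarrow> real"
  assumes diff: "\<And>t. \<eta> differentiable (at t)" and "\<eta> 0 = 0"
    and bound: "\<And>t. t * x - \<eta> t \<le> L" and "0 < r"
  obtains t0 y where "(\<eta> has_real_derivative y) (at t0)" and "\<bar>y - x\<bar> < r"
    and "- L \<le> \<eta> t0 - t0 * y"
proof -
  have "0 \<le> L" using bound[of 0] \<open>\<eta> 0 = 0\<close> by simp
  define \<delta> where "\<delta> = r\<^sup>2 / (4 * (L + 1))"
  have "0 < \<delta>" using \<open>0 < r\<close> \<open>0 \<le> L\<close> by (simp add: \<delta>_def)
  define R where "R = sqrt ((L + 1) / \<delta>)"
  have "0 < R" and R2: "\<delta> * R\<^sup>2 = L + 1" using \<open>0 < \<delta>\<close> \<open>0 \<le> L\<close> by (simp_all add: R_def)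
  define h where "h t = t * x - \<eta> t - \<delta> * t\<^sup>2" for t
  have penalised: "h t \<le> L - \<delta> * t\<^sup>2" for t using bound[of t] by (simp add: h_def)
  have "continuous_on A \<eta>" for A
    using diff by (intro continuous_at_imp_continuous_on ballI differentiable_imp_continuous_within)
  then have "continuous_on {-R..R} h" unfolding h_def by (intro continuous_intros)
  moreover have "h t < h 0" if "R \<le> \<bar>t\<bar>" for t
  proof -
    have "R\<^sup>2 \<le> t\<^sup>2" using that \<open>0 < R\<close> by (simp add: abs_le_square_iff[symmetric])
    then have "\<delta> * R\<^sup>2 \<le> \<delta> * t\<^sup>2" using \<open>0 < \<delta>\<close> by simp
    then show ?thesis using R2 penalised[of t] \<open>\<eta> 0 = 0\<close> by (simp add: h_def)
  qed
  ultimately obtain t0 where "\<bar>t0\<bar> < R" and "h 0 \<le> h t0"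
    and local_max: "\<And>t. \<bar>t0 - t\<bar> < R - \<bar>t0\<bar> \<Longrightarrow> h t \<le> h t0"
    using interior_maximum[OF _ \<open>0 < R\<close>] by blast
  have penalty: "\<delta> * t0\<^sup>2 \<le> L" using \<open>h 0 \<le> h t0\<close> penalised[of t0] \<open>\<eta> 0 = 0\<close> by (simp add: h_def)
  obtain y where y: "(\<eta> has_real_derivative y) (at t0)"
    using diff[of t0] by (auto simp: real_differentiable_def)
  have "(h has_real_derivative (x - y - \<delta> * (2 * t0))) (at t0)"
    unfolding h_def by (auto intro!: derivative_eq_intros y)
  then have "x - y - \<delta> * (2 * t0) = 0"
    using \<open>\<bar>t0\<bar> < R\<close> local_max by (intro DERIV_local_max[where d = "R - \<bar>t0\<bar>"]) auto
  then have y_eq: "y = x - 2 * \<delta> * t0" by simp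
  have "\<bar>y - x\<bar>\<^sup>2 = 4 * \<delta> * (\<delta> * t0\<^sup>2)" by (simp add: y_eq power2_eq_square)
  also have "\<dots> < 4 * \<delta> * (L + 1)" using penalty \<open>0 < \<delta>\<close> by simp
  also have "\<dots> = r\<^sup>2"
    unfolding \<delta>_def using \<open>0 \<le> L\<close> by (simp add: field_simps)
  finally have "\<bar>y - x\<bar>\<^sup>2 < r\<^sup>2" .
  then have close: "\<bar>y - x\<bar> < r" using power_less_imp_less_base \<open>0 < r\<close> by fastforce
  have "\<eta> t0 - t0 * y = - (t0 * x - \<eta> t0) + 2 * (\<delta> * t0\<^sup>2)"
    by (simp add: y_eq power2_eq_square algebra_simps)
  moreover have "0 \<le> \<delta> * t0\<^sup>2" using \<open>0 < \<delta>\<close> by simp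
  ultimately have "- L \<le> \<eta> t0 - t0 * y" using bound[of t0] by linarith
  with y close show ?thesis by (rule that)
qed

lemma ln_sandwich_limit:
  fixes m c :: "nat \<Rightarrow> real" and g :: "nat \<Rightarrow> nat"
  assumes "0 < F"
    and lower: "\<And>N. exp (- c N) * F ^ g N \<le> m N" and upper: "\<And>N. m N \<le> exp (c N) * F ^ g N"
    and c: "(\<lambda>N. c N / real N) \<longlonglongrightarrow> 0" and g: "(\<lambda>N. real (g N) / real N) \<longlonglongrightarrow> 1"
  shows "(\<lambda>N. ln (m N) / real N) \<longlonglongrightarrow> ln F"
proof (rule tendsto_sandwich)
  have pos: "0 < exp (- c N) * F ^ g N" for N using \<open>0 < F\<close> by simp
  have "- c N + g N * ln F \<le> ln (m N)" for N
    using ln_mono[OF lower pos] \<open>0 < F\<close> by (simp add: ln_mult ln_realpow)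
  moreover have "ln (m N) \<le> c N + g N * ln F" for N
    using ln_mono[OF upper order.strict_trans2[OF pos lower]] \<open>0 < F\<close> by (simp add: ln_mult ln_realpow)
  ultimately have "(- c N + g N * ln F) / real N \<le> ln (m N) / real N"
    and "ln (m N) / real N \<le> (c N + g N * ln F) / real N" for N
    by (auto intro: divide_right_mono)
  then show "eventually (\<lambda>N. - (c N / real N) + real (g N) / real N * ln F \<le> ln (m N) / real N) sequentially"
    and "eventually (\<lambda>N. ln (m N) / real N \<le> c N / real N + real (g N) / real N * ln F) sequentially"
    by (simp_all add: add_divide_distrib diff_divide_distrib)
  show "(\<lambda>N. - (c N / real N) + real (g N) / real N * ln F) \<longlonglongrightarrow> ln F"
    and "(\<lambda>N. c N / real N + real (g N) / real N * ln F) \<longlonglongrightarrow> ln F"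
    using tendsto_add[OF tendsto_minus[OF c] tendsto_mult_right[OF g, of "ln F"]]
      tendsto_add[OF c tendsto_mult_right[OF g, of "ln F"]] by simp_all
qed

context prob_space
begin

lemma integral_exp_pos:
  fixes f :: "'a \<Rightarrow> real"
  assumes "integrable M (\<lambda>\<omega>. exp (f \<omega>))"
  shows "0 < (\<integral>\<omega>. exp (f \<omega>) \<partial>M)"
proof -
  have "0 \<le> (\<integral>\<omega>. exp (f \<omega>) \<partial>M)" by (intro integral_nonneg_AE) auto
  moreover have "(\<integral>\<omega>. exp (f \<omega>) \<partial>M) \<noteq> 0"
  proof
    assume "(\<integral>\<omega>. exp (f \<omega>) \<partial>M) = 0"
    then have "AE \<omega> in M. exp (f \<omega>) = 0"
      using integral_nonneg_eq_0_iff_AE[OF assms] by auto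
    then show False by simp
  qed
  ultimately show ?thesis by linarith
qed

lemma exp_bounded_integrable:
  fixes f :: "'a \<Rightarrow> real"
  assumes [measurable]: "f \<in> borel_measurable M" and "AE \<omega> in M. \<bar>f \<omega>\<bar> \<le> C"
  shows "integrable M (\<lambda>\<omega>. exp (t * f \<omega>))"
proof (rule integrable_const_bound)
  show "AE \<omega> in M. norm (exp (t * f \<omega>)) \<le> exp (\<bar>t\<bar> * C)"
    using assms(2)
  proof eventually_elim
    case (elim \<omega>)
    have "t * f \<omega> \<le> \<bar>t\<bar> * \<bar>f \<omega>\<bar>" by (metis abs_ge_self abs_mult)
    also have "\<dots> \<le> \<bar>t\<bar> * C" using elim by (intro mult_left_mono) auto
    finally show ?case by simp
  qed
qed simp

(* Jensen's inequality for the exponential, via the tangent line exp y >= 1 + y. *)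
lemma exp_mean_le_integral_exp:
  fixes Y :: "'a \<Rightarrow> real"
  assumes "integrable M Y" and "integrable M (\<lambda>\<omega>. exp (t * Y \<omega>))"
  shows "exp (t * expectation Y) \<le> (\<integral>\<omega>. exp (t * Y \<omega>) \<partial>M)"
proof -
  define m where "m = expectation Y"
  have "exp (t * m) = (\<integral>\<omega>. exp (t * m) * (1 + t * (Y \<omega> - m)) \<partial>M)"
    using assms(1) prob_space
    by (simp add: m_def algebra_simps Bochner_Integration.integral_add Bochner_Integration.integral_diff)
  also have "\<dots> \<le> (\<integral>\<omega>. exp (t * Y \<omega>) \<partial>M)"
  proof (rule integral_mono)
    fix \<omega>
    have "exp (t * m) * (1 + t * (Y \<omega> - m)) \<le> exp (t * m) * exp (t * (Y \<omega> - m))"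
      using exp_ge_add_one_self[of "t * (Y \<omega> - m)"] by simp
    also have "\<dots> = exp (t * Y \<omega>)" by (simp add: mult_exp_exp algebra_simps)
    finally show "exp (t * m) * (1 + t * (Y \<omega> - m)) \<le> exp (t * Y \<omega>)" .
  qed (use assms in auto)
  finally show ?thesis by (simp add: m_def)
qed

lemma integral_exp_series:
  fixes Y :: "'a \<Rightarrow> real"
  assumes [measurable]: "Y \<in> borel_measurable M" and bound: "AE \<omega> in M. \<bar>Y \<omega>\<bar> \<le> K"
  shows "(\<integral>\<omega>. exp (t * Y \<omega>) \<partial>M) = (\<Sum>k. t ^ k / fact k * (\<integral>\<omega>. Y \<omega> ^ k \<partial>M))"
proof -
  define f where "f k \<omega> = (t * Y \<omega>) ^ k / fact k" for k \<omega>
  have [measurable]: "f k \<in> borel_measurable M" for k unfolding f_def by measurable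
  have f_bound: "AE \<omega> in M. \<bar>f k \<omega>\<bar> \<le> (\<bar>t\<bar> * K) ^ k / fact k" for k
    using bound
  proof eventually_elim
    case (elim \<omega>)
    have "\<bar>t * Y \<omega>\<bar> ^ k \<le> (\<bar>t\<bar> * K) ^ k"
      using elim by (intro power_mono) (auto simp: abs_mult mult_left_mono)
    then show ?case by (simp add: f_def power_abs divide_right_mono)
  qed
  have f_int: "integrable M (f k)" for k
    using f_bound[of k] by (intro integrable_const_bound) auto
  have "(\<integral>\<omega>. exp (t * Y \<omega>) \<partial>M) = (\<integral>\<omega>. (\<Sum>k. f k \<omega>) \<partial>M)"
    using exp_converges[of "t * Y _"]
    by (intro Bochner_Integration.integral_cong refl)
       (simp add: f_def sums_iff divide_inverse_commute scaleR_conv_of_real)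
  also have "\<dots> = (\<Sum>k. integral\<^sup>L M (f k))"
  proof (rule integral_suminf[OF f_int])
    show "AE \<omega> in M. summable (\<lambda>k. norm (f k \<omega>))"
      using summable_exp[of "\<bar>t * Y _\<bar>"]
      by (simp add: f_def power_abs divide_inverse_commute abs_mult)
    show "summable (\<lambda>k. \<integral>\<omega>. norm (f k \<omega>) \<partial>M)"
    proof (rule summable_comparison_test'[OF summable_exp[of "\<bar>t\<bar> * K"]])
      fix k :: nat
      have "(\<integral>\<omega>. norm (f k \<omega>) \<partial>M) \<le> (\<integral>\<omega>. (\<bar>t\<bar> * K) ^ k / fact k \<partial>M)"
        using f_int[of k] f_bound[of k] by (intro integral_mono_AE) auto
      then show "norm (\<integral>\<omega>. norm (f k \<omega>) \<partial>M) \<le> inverse (fact k) * (\<bar>t\<bar> * K) ^ k"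
        by (simp add: prob_space divide_inverse_commute)
    qed
  qed
  also have "\<dots> = (\<Sum>k. t ^ k / fact k * (\<integral>\<omega>. Y \<omega> ^ k \<partial>M))"
    unfolding f_def power_mult_distrib by (simp add: integral_divide_zero mult.commute)
  finally show ?thesis .
qed

lemma integral_exp_perturbed:
  fixes A B :: "'a \<Rightarrow> real"
  assumes "integrable M (\<lambda>\<omega>. exp (A \<omega>))" and "integrable M (\<lambda>\<omega>. exp (A \<omega> + B \<omega>))"
    and "AE \<omega> in M. \<bar>B \<omega>\<bar> \<le> c"
  shows "exp (- c) * (\<integral>\<omega>. exp (A \<omega>) \<partial>M) \<le> (\<integral>\<omega>. exp (A \<omega> + B \<omega>) \<partial>M)"
    and "(\<integral>\<omega>. exp (A \<omega> + B \<omega>) \<partial>M) \<le> exp c * (\<integral>\<omega>. exp (A \<omega>) \<partial>M)"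
proof -
  have "(\<integral>\<omega>. exp (- c) * exp (A \<omega>) \<partial>M) \<le> (\<integral>\<omega>. exp (A \<omega> + B \<omega>) \<partial>M)"
  proof (rule integral_mono_AE)
    show "AE \<omega> in M. exp (- c) * exp (A \<omega>) \<le> exp (A \<omega> + B \<omega>)"
      using assms(3) by eventually_elim (simp add: mult_exp_exp abs_le_iff)
  qed (use assms(1,2) in simp_all)
  then show "exp (- c) * (\<integral>\<omega>. exp (A \<omega>) \<partial>M) \<le> (\<integral>\<omega>. exp (A \<omega> + B \<omega>) \<partial>M)" by simp
  have "(\<integral>\<omega>. exp (A \<omega> + B \<omega>) \<partial>M) \<le> (\<integral>\<omega>. exp c * exp (A \<omega>) \<partial>M)"
  proof (rule integral_mono_AE)
    show "AE \<omega> in M. exp (A \<omega> + B \<omega>) \<le> exp c * exp (A \<omega>)"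
      using assms(3) by eventually_elim (simp add: mult_exp_exp abs_le_iff)
  qed (use assms(1,2) in simp_all)
  then show "(\<integral>\<omega>. exp (A \<omega> + B \<omega>) \<partial>M) \<le> exp c * (\<integral>\<omega>. exp (A \<omega>) \<partial>M)" by simp
qed

end

locale gartner_ellis = prob_space M for M :: "'a measure" +
  fixes S :: "nat \<Rightarrow> 'a \<Rightarrow> real" and \<eta> :: "real \<Rightarrow> real"
  assumes S_measurable [measurable]: "\<And>N. S N \<in> borel_measurable M"
    and exp_S_integrable: "\<And>N t. integrable M (\<lambda>\<omega>. exp (t * S N \<omega>))"
    and log_mgf_limit: "\<And>t. (\<lambda>N. ln (\<integral>\<omega>. exp (t * S N \<omega>) \<partial>M) / real N) \<longlonglongrightarrow> \<eta> t"
begin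

definition mgf :: "nat \<Rightarrow> real \<Rightarrow> real" where
  "mgf N t = (\<integral>\<omega>. exp (t * S N \<omega>) \<partial>M)"

lemma mgf_pos: "0 < mgf N t"
  unfolding mgf_def using exp_S_integrable by (rule integral_exp_pos)

lemma mgf_eventually_upper:
  assumes "0 < e"
  shows "eventually (\<lambda>N. mgf N t \<le> exp (real N * (\<eta> t + e))) sequentially"
proof -
  have "eventually (\<lambda>N. ln (mgf N t) / real N < \<eta> t + e) sequentially"
    using log_mgf_limit[of t] assms by (intro order_tendstoD) (auto simp: mgf_def)
  then show ?thesis using eventually_gt_at_top[of 0]
  proof eventually_elim
    case (elim N)
    then have "ln (mgf N t) \<le> real N * (\<eta> t + e)" by (simp add: field_simps)
    then have "exp (ln (mgf N t)) \<le> exp (real N * (\<eta> t + e))" by simp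
    then show ?case using mgf_pos by simp
  qed
qed

lemma mgf_eventually_lower:
  assumes "0 < e"
  shows "eventually (\<lambda>N. exp (real N * (\<eta> t - e)) \<le> mgf N t) sequentially"
proof -
  have "eventually (\<lambda>N. \<eta> t - e < ln (mgf N t) / real N) sequentially"
    using log_mgf_limit[of t] assms by (intro order_tendstoD) (auto simp: mgf_def)
  then show ?thesis using eventually_gt_at_top[of 0]
  proof eventually_elim
    case (elim N)
    then have "real N * (\<eta> t - e) \<le> ln (mgf N t)" by (simp add: field_simps)
    then have "exp (real N * (\<eta> t - e)) \<le> exp (ln (mgf N t))" by simp
    then show ?case using mgf_pos by simp
  qed
qed

(* eta 0 = 0 since M_N(0) = 1. *)
lemma eta_zero: "\<eta> 0 = 0"
  using LIMSEQ_unique[OF log_mgf_limit[of 0]] by (simp add: prob_space)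

lemma chernoff_upper:
  assumes "0 < t" and "0 < N"
  shows "measure M {\<omega> \<in> space M. a \<le> S N \<omega> / real N} \<le> exp (- (t * real N) * a) * mgf N t"
proof -
  have eq: "exp ((t * real N) * (S N \<omega> / real N)) = exp (t * S N \<omega>)" for \<omega>
    using assms(2) by simp
  have "measure M {\<omega> \<in> space M. a \<le> S N \<omega> / real N}
      \<le> exp (- (t * real N) * a) * (\<integral>\<omega>\<in>space M. exp ((t * real N) * (S N \<omega> / real N)) \<partial>M)"
    using assms exp_S_integrable[of t N]
    using integrable_mult_indicator[OF sets.top exp_S_integrable[of t N]]
    by (intro Chernoff_ineq_ge) (auto simp: eq set_integrable_def)
  also have "\<dots> = exp (- (t * real N) * a) * mgf N t"
    by (simp only: eq) (simp add: set_integral_space exp_S_integrable mgf_def)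
  finally show ?thesis .
qed

(* Upper tail beyond a point a to the right of the mean m: every slope t with t a - eta t > c > 0 is
   positive, and the Chernoff bound decays like exp(-N c). *)
lemma upper_tail:
  assumes mean: "\<And>s. s * m \<le> \<eta> s" and "m \<le> a" and "0 < c" and slope: "c < t * a - \<eta> t"
    and "0 < e"
  shows "eventually (\<lambda>N. measure M {\<omega> \<in> space M. a \<le> S N \<omega> / real N} \<le> exp (real N * (e - c)))
           sequentially"
proof -
  have "0 < t"
  proof (rule ccontr)
    assume "\<not> 0 < t"
    then have "t * a \<le> t * m" using \<open>m \<le> a\<close> by (simp add: mult_left_mono_neg)
    then show False using mean[of t] slope \<open>0 < c\<close> by linarith
  qed
  show ?thesis using mgf_eventually_upper[OF \<open>0 < e\<close>, of t] eventually_gt_at_top[of 0]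
  proof eventually_elim
    case (elim N)
    have "measure M {\<omega> \<in> space M. a \<le> S N \<omega> / real N} \<le> exp (- (t * real N) * a) * mgf N t"
      using chernoff_upper[OF \<open>0 < t\<close> elim(2)] .
    also have "\<dots> \<le> exp (- (t * real N) * a) * exp (real N * (\<eta> t + e))"
      using elim(1) by simp
    also have "\<dots> = exp (real N * (e - (t * a - \<eta> t)))"
      by (simp add: exp_add[symmetric] algebra_simps)
    also have "\<dots> \<le> exp (real N * (e - c))"
      using slope by (intro exp_mono mult_left_mono) auto
    finally show ?case .
  qed
qed

(* The hypotheses are symmetric under S_N |-> -S_N; this yields the lower tails from the upper ones. *)
lemma reflected: "gartner_ellis M (\<lambda>N \<omega>. - S N \<omega>) (\<lambda>t. \<eta> (- t))"
proof unfold_locales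
  show "integrable M (\<lambda>\<omega>. exp (t * - S N \<omega>))" for N t
    using exp_S_integrable[of "- t" N] by simp
  show "(\<lambda>N. ln (\<integral>\<omega>. exp (t * - S N \<omega>) \<partial>M) / real N) \<longlonglongrightarrow> \<eta> (- t)" for t
    using log_mgf_limit[of "- t"] by simp
qed simp

(* A closed set to the right of the mean is controlled by its leftmost point. *)
lemma closed_right_of_mean:
  assumes mean: "\<And>s. s * m \<le> \<eta> s" and U: "closed U" "U \<subseteq> {m..}"
    and c: "0 < c" "ereal c < (INF x\<in>U. Lambda_fun \<eta> x)" and "0 < e"
  shows "eventually (\<lambda>N. measure M {\<omega> \<in> space M. S N \<omega> / real N \<in> U} \<le> exp (real N * (e - c)))
           sequentially"
proof (cases "U = {}")
  case False
  define a where "a = Inf U"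
  have bdd: "bdd_below U" using U(2) by (meson bdd_below_Ici bdd_below_mono)
  have "a \<in> U" unfolding a_def using closed_contains_Inf[OF False bdd] U(1) by simp
  then have "m \<le> a" using U(2) by auto
  have "ereal c < Lambda_fun \<eta> a" using c(2) \<open>a \<in> U\<close> by (meson INF_lower less_le_trans)
  then obtain t where t: "c < t * a - \<eta> t" by (auto simp: Lambda_fun_def less_SUP_iff)
  show ?thesis using upper_tail[OF mean \<open>m \<le> a\<close> c(1) t \<open>0 < e\<close>]
  proof eventually_elim
    case (elim N)
    have "{\<omega> \<in> space M. S N \<omega> / real N \<in> U} \<subseteq> {\<omega> \<in> space M. a \<le> S N \<omega> / real N}"
      using bdd by (auto simp: a_def intro: cInf_lower)
    then have "measure M {\<omega> \<in> space M. S N \<omega> / real N \<in> U}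
        \<le> measure M {\<omega> \<in> space M. a \<le> S N \<omega> / real N}"
      by (intro finite_measure_mono) measurable
    with elim show ?case by linarith
  qed
qed simp

lemma closed_left_of_mean:
  assumes mean: "\<And>s. s * m \<le> \<eta> s" and V: "closed V" "V \<subseteq> {..m}"
    and c: "0 < c" "ereal c < (INF x\<in>V. Lambda_fun \<eta> x)" and "0 < e"
  shows "eventually (\<lambda>N. measure M {\<omega> \<in> space M. S N \<omega> / real N \<in> V} \<le> exp (real N * (e - c)))
           sequentially"
proof -
  interpret reflection: gartner_ellis M "\<lambda>N \<omega>. - S N \<omega>" "\<lambda>t. \<eta> (- t)"
    by (rule reflected)
  have "eventually (\<lambda>N. measure M {\<omega> \<in> space M. - S N \<omega> / real N \<in> uminus ` V}
                        \<le> exp (real N * (e - c))) sequentially"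
  proof (rule reflection.closed_right_of_mean[where m = "- m"])
    show "s * - m \<le> \<eta> (- s)" for s using mean[of "- s"] by simp
    show "closed (uminus ` V)" using closed_negations[OF V(1)] by simp
    show "uminus ` V \<subseteq> {- m..}" using V(2) by auto
    show "ereal c < (INF x\<in>uminus ` V. Lambda_fun (\<lambda>t. \<eta> (- t)) x)"
      using c(2) by (simp add: image_image Lambda_fun_reflect)
  qed (use assms in auto)
  moreover have "{\<omega> \<in> space M. - S N \<omega> / real N \<in> uminus ` V} = {\<omega> \<in> space M. S N \<omega> / real N \<in> V}" for N
    by force
  ultimately show ?thesis by simp
qed

lemma closed_measure_bound:
  assumes mean: "\<And>s. s * m \<le> \<eta> s" and F: "closed F"
    and c: "0 < c" "ereal c < (INF x\<in>F. Lambda_fun \<eta> x)" and "0 < e"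
  shows "eventually (\<lambda>N. measure M {\<omega> \<in> space M. S N \<omega> / real N \<in> F} \<le> 2 * exp (real N * (e - c)))
           sequentially"
proof -
  have inf_part: "ereal c < (INF x\<in>F \<inter> A. Lambda_fun \<eta> x)" for A
    using c(2) by (rule less_le_trans) (intro INF_superset_mono, auto)
  have right: "eventually (\<lambda>N. measure M {\<omega> \<in> space M. S N \<omega> / real N \<in> F \<inter> {m..}}
                                  \<le> exp (real N * (e - c))) sequentially"
    using F c(1) inf_part \<open>0 < e\<close> by (intro closed_right_of_mean[OF mean]) auto
  have left: "eventually (\<lambda>N. measure M {\<omega> \<in> space M. S N \<omega> / real N \<in> F \<inter> {..m}}
                                  \<le> exp (real N * (e - c))) sequentially"
    using F c(1) inf_part \<open>0 < e\<close> by (intro closed_left_of_mean[OF mean]) auto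
  have "F \<in> sets borel" using F by (simp add: borel_closed)
  show ?thesis using right left
  proof eventually_elim
    case (elim N)
    have "measure M {\<omega> \<in> space M. S N \<omega> / real N \<in> F}
        \<le> measure M ({\<omega> \<in> space M. S N \<omega> / real N \<in> F \<inter> {m..}}
                     \<union> {\<omega> \<in> space M. S N \<omega> / real N \<in> F \<inter> {..m}})"
      using \<open>F \<in> sets borel\<close> by (intro finite_measure_mono) auto
    also have "\<dots> \<le> measure M {\<omega> \<in> space M. S N \<omega> / real N \<in> F \<inter> {m..}}
                   + measure M {\<omega> \<in> space M. S N \<omega> / real N \<in> F \<inter> {..m}}"
      using \<open>F \<in> sets borel\<close> by (intro measure_Un_le) auto
    finally show ?case using elim by simp
  qed
qed

lemma closed_eventually_bound:
  assumes mean: "\<And>s. s * m \<le> \<eta> s" and F: "closed F" and c: "ereal c < (INF x\<in>F. Lambda_fun \<eta> x)"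
  shows "eventually (\<lambda>N. Q_fun M S N F \<le> ereal (- c)) sequentially"
proof (cases "c < 0")
  case True
  show ?thesis using eventually_gt_at_top[of 0]
  proof eventually_elim
    case (elim N)
    have "measure M {\<omega> \<in> space M. S N \<omega> / real N \<in> F} \<le> 1" by simp
    also have "1 \<le> exp (- real N * c)"
      using True by (simp add: mult_nonneg_nonpos less_imp_le)
    finally show ?case by (rule Q_fun_le[OF elim])
  qed
next
  case False
  obtain c' where c': "ereal c < ereal c'" "ereal c' < (INF x\<in>F. Lambda_fun \<eta> x)"
    using ereal_dense2[OF c] by blast
  define e where "e = (c' - c) / 2"
  have "0 < c'" "0 < e" using c'(1) False by (auto simp: e_def)
  show ?thesis
    using closed_measure_bound[OF mean F \<open>0 < c'\<close> c'(2) \<open>0 < e\<close>] eventually_gt_at_top[of 0]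
      eventually_real_gt[of "ln 2 / e"]
  proof eventually_elim
    case (elim N)
    have "ln 2 \<le> real N * e" using elim(3) \<open>0 < e\<close> by (simp add: field_simps)
    then have "2 \<le> exp (real N * e)" by (metis exp_le_cancel_iff exp_ln zero_less_numeral)
    then have "2 * exp (real N * (e - c')) \<le> exp (real N * e) * exp (real N * (e - c'))" by simp
    also have "\<dots> = exp (- real N * c)" by (simp add: mult_exp_exp e_def algebra_simps)
    finally show ?case using elim(1) by (intro Q_fun_le[OF elim(2)]) simp
  qed
qed

lemma mgf_window_split:
  assumes "0 < N" and "0 < s"
  shows "mgf N t \<le> measure M {\<omega> \<in> space M. S N \<omega> / real N \<in> {y - r<..<y + r}}
                      * exp (real N * (t * y + \<bar>t\<bar> * r))
           + exp (- (s * real N) * (y + r)) * mgf N (t + s)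
           + exp ((s * real N) * (y - r)) * mgf N (t - s)"
proof -
  define B where "B = {\<omega> \<in> space M. S N \<omega> / real N \<in> {y - r<..<y + r}}"
  have [measurable]: "B \<in> sets M" unfolding B_def by measurable
  have ind: "integrable M (indicator B :: 'a \<Rightarrow> real)"
    by (intro integrable_real_indicator) (auto simp: less_top[symmetric])
  have "mgf N t \<le> (\<integral>\<omega>. indicator B \<omega> * exp (real N * (t * y + \<bar>t\<bar> * r))
      + exp (- (s * real N) * (y + r)) * exp ((t + s) * S N \<omega>)
      + exp ((s * real N) * (y - r)) * exp ((t - s) * S N \<omega>) \<partial>M)"
    unfolding mgf_def
  proof (rule integral_mono)
    fix \<omega> assume "\<omega> \<in> space M"
    then have "indicator B \<omega> = (indicator {y - r<..<y + r} (S N \<omega> / real N) :: real)"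
      by (simp add: B_def indicator_def)
    then show "exp (t * S N \<omega>) \<le> indicator B \<omega> * exp (real N * (t * y + \<bar>t\<bar> * r))
        + exp (- (s * real N) * (y + r)) * exp ((t + s) * S N \<omega>)
        + exp ((s * real N) * (y - r)) * exp ((t - s) * S N \<omega>)"
      using exp_window_split[of "real N" s t "S N \<omega>" y r] assms by simp
  qed (use ind exp_S_integrable in auto)
  also have "\<dots> = measure M B * exp (real N * (t * y + \<bar>t\<bar> * r))
      + exp (- (s * real N) * (y + r)) * mgf N (t + s) + exp ((s * real N) * (y - r)) * mgf N (t - s)"
    using ind exp_S_integrable unfolding mgf_def
    by (simp add: Bochner_Integration.integral_add integral_indicator Int_absorb2 sets.sets_into_space)
  finally show ?thesis by (simp add: B_def)
qed

lemma shifted_mgf_bound: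
  assumes "\<eta> (t + u) - u * b < \<eta> t - \<delta>" and "0 < e"
  shows "eventually (\<lambda>N. exp (- (u * real N) * b) * mgf N (t + u) \<le> exp (real N * (\<eta> t - \<delta> + e)))
           sequentially"
  using mgf_eventually_upper[OF \<open>0 < e\<close>, of "t + u"]
proof eventually_elim
  case (elim N)
  have "exp (- (u * real N) * b) * mgf N (t + u) \<le> exp (- (u * real N) * b) * exp (real N * (\<eta> (t + u) + e))"
    using elim by simp
  also have "\<dots> = exp (real N * (\<eta> (t + u) - u * b + e))" by (simp add: mult_exp_exp algebra_simps)
  also have "\<dots> \<le> exp (real N * (\<eta> t - \<delta> + e))" using assms(1) by (intro exp_mono mult_left_mono) auto
  finally show ?case .
qed

(* Lower bound on the probability of a window around eta'(t): by derivative_secants both tilted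
   tails are exponentially smaller than M_N(t), so the window carries half of it. *)
lemma window_mass_lower:
  assumes deriv: "(\<eta> has_real_derivative y) (at t)" and "0 < r" and "0 < e"
  shows "eventually (\<lambda>N. exp (real N * (\<eta> t - t * y - \<bar>t\<bar> * r - e)) / 2
                        \<le> measure M {\<omega> \<in> space M. S N \<omega> / real N \<in> {y - r<..<y + r}}) sequentially"
proof -
  obtain s where "0 < s" and right: "\<eta> (t + s) - s * (y + r) < \<eta> t - s * r / 2"
    and left: "\<eta> (t - s) + s * (y - r) < \<eta> t - s * r / 2"
    using derivative_secants[OF deriv \<open>0 < r\<close>] by blast
  define e' where "e' = min e (s * r / 8)"
  have "0 < e'" "e' \<le> e" "e' \<le> s * r / 8" using \<open>0 < e\<close> \<open>0 < s\<close> \<open>0 < r\<close> by (auto simp: e'_def)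
  define K where "K = t * y + \<bar>t\<bar> * r"
  define P where "P N = measure M {\<omega> \<in> space M. S N \<omega> / real N \<in> {y - r<..<y + r}}" for N
  have tail_right: "eventually (\<lambda>N. exp (- (s * real N) * (y + r)) * mgf N (t + s)
      \<le> exp (real N * (\<eta> t - s * r / 2 + e'))) sequentially"
    using right \<open>0 < e'\<close> by (rule shifted_mgf_bound)
  have "eventually (\<lambda>N. exp (- (- s * real N) * (y - r)) * mgf N (t + - s)
      \<le> exp (real N * (\<eta> t - s * r / 2 + e'))) sequentially"
    using left \<open>0 < e'\<close> by (intro shifted_mgf_bound) simp_all
  then have tail_left: "eventually (\<lambda>N. exp ((s * real N) * (y - r)) * mgf N (t - s)
      \<le> exp (real N * (\<eta> t - s * r / 2 + e'))) sequentially"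
    by simp
  show ?thesis
    using mgf_eventually_lower[OF \<open>0 < e'\<close>, of t] tail_right tail_left eventually_gt_at_top[of 0]
      eventually_real_gt[of "4 * ln 4 / (s * r)"]
  proof eventually_elim
    case (elim N)
    define A where "A = exp (real N * (\<eta> t - e'))"
    have small: "exp (real N * (\<eta> t - s * r / 2 + e')) \<le> A / 4"
      unfolding A_def using \<open>0 < s\<close> \<open>0 < r\<close> \<open>e' \<le> s * r / 8\<close> elim(5)
      by (intro exp_gap_quarter) simp_all
    have "A / 2 \<le> P N * exp (real N * K)"
      using mgf_window_split[OF elim(4) \<open>0 < s\<close>, of t y r] elim(1-3) small
      unfolding A_def P_def K_def by linarith
    moreover have "A = exp (real N * (\<eta> t - e' - K)) * exp (real N * K)"
      unfolding A_def mult_exp_exp by (simp add: algebra_simps)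
    ultimately have "exp (real N * (\<eta> t - e' - K)) / 2 \<le> P N" by simp
    moreover have "exp (real N * (\<eta> t - t * y - \<bar>t\<bar> * r - e)) \<le> exp (real N * (\<eta> t - e' - K))"
      using \<open>e' \<le> e\<close> by (intro exp_mono mult_left_mono) (auto simp: K_def)
    ultimately show ?case unfolding P_def by linarith
  qed
qed

lemma window_lower:
  assumes deriv: "(\<eta> has_real_derivative y) (at t)" and "0 < r" and "0 < \<epsilon>"
    and G: "{y - r<..<y + r} \<subseteq> G" "G \<in> sets borel"
  shows "eventually (\<lambda>N. ereal (\<eta> t - t * y - \<bar>t\<bar> * r - \<epsilon>) \<le> Q_fun M S N G) sequentially"
proof -
  have "0 < \<epsilon> / 2" using \<open>0 < \<epsilon>\<close> by simp
  show ?thesis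
    using window_mass_lower[OF deriv \<open>0 < r\<close> \<open>0 < \<epsilon> / 2\<close>] eventually_gt_at_top[of 0]
      eventually_real_gt[of "2 * ln 2 / \<epsilon>"]
  proof eventually_elim
    case (elim N)
    define c where "c = \<eta> t - t * y - \<bar>t\<bar> * r - \<epsilon> / 2"
    have "measure M {\<omega> \<in> space M. S N \<omega> / real N \<in> {y - r<..<y + r}}
        \<le> measure M {\<omega> \<in> space M. S N \<omega> / real N \<in> G}"
      using G by (intro finite_measure_mono) auto
    with elim(1) have "(1 / 2) * exp (real N * c) \<le> measure M {\<omega> \<in> space M. S N \<omega> / real N \<in> G}"
      by (simp add: c_def)
    then have "ereal (c - ln 2 / real N) \<le> Q_fun M S N G"
      using Q_fun_ge[of N "1 / 2" c M S G] elim(2) by (simp add: ln_div)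
    moreover have "ln 2 / real N \<le> \<epsilon> / 2"
      using elim(2,3) \<open>0 < \<epsilon>\<close> by (simp add: field_simps)
    moreover have "\<eta> t - t * y - \<bar>t\<bar> * r - \<epsilon> \<le> c - ln 2 / real N"
      using \<open>ln 2 / real N \<le> \<epsilon> / 2\<close> by (simp add: c_def)
    ultimately show ?case by (meson ereal_less_eq(3) order_trans)
  qed
qed

theorem ldp_upper_bound:
  assumes "\<And>s. s * m \<le> \<eta> s" and "closed F"
  shows "limsup (\<lambda>N. Q_fun M S N F) \<le> - (INF x\<in>F. Lambda_fun \<eta> x)"
  by (rule limsup_le_uminus) (rule closed_eventually_bound[OF assms])

(* Q_N(G) is eventually at least eta t - t y - epsilon when G contains a ball around y = eta'(t);
   the window radius is chosen so that the tilting error |t| r is at most epsilon / 2. *)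
lemma slope_window_lower:
  assumes deriv: "(\<eta> has_real_derivative y) (at t)" and "0 < \<rho>" and "ball y \<rho> \<subseteq> G"
    and "G \<in> sets borel" and "0 < \<epsilon>"
  shows "eventually (\<lambda>N. ereal (\<eta> t - t * y - \<epsilon>) \<le> Q_fun M S N G) sequentially"
proof -
  define a where "a = \<bar>t\<bar> + 1"
  define r where "r = min \<rho> (\<epsilon> / (2 * a))"
  have "0 < a" "\<bar>t\<bar> \<le> a" by (simp_all add: a_def)
  have "0 < r" "r \<le> \<rho>" using \<open>0 < \<rho>\<close> \<open>0 < \<epsilon>\<close> \<open>0 < a\<close> by (simp_all add: r_def)
  have "\<bar>t\<bar> * r \<le> a * (\<epsilon> / (2 * a))"
    using \<open>0 < r\<close> \<open>\<bar>t\<bar> \<le> a\<close> \<open>0 < \<epsilon>\<close> \<open>0 < a\<close> by (intro mult_mono) (auto simp: r_def)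
  also have "\<dots> = \<epsilon> / 2" using \<open>0 < a\<close> by simp
  finally have "\<eta> t - t * y - \<epsilon> \<le> \<eta> t - t * y - \<bar>t\<bar> * r - \<epsilon> / 2" by simp
  moreover have "{y - r<..<y + r} \<subseteq> G"
    using \<open>r \<le> \<rho>\<close> \<open>ball y \<rho> \<subseteq> G\<close> by (auto simp: ball_eq_greaterThanLessThan)
  then have "eventually (\<lambda>N. ereal (\<eta> t - t * y - \<bar>t\<bar> * r - \<epsilon> / 2) \<le> Q_fun M S N G) sequentially"
    using \<open>0 < \<epsilon>\<close> \<open>G \<in> sets borel\<close> by (intro window_lower[OF deriv \<open>0 < r\<close>]) auto
  ultimately show ?thesis by (elim eventually_mono) (meson ereal_less_eq(3) order_trans)
qed

(* Lower bound at a single point of an open set, using an exposed slope near it. *)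
lemma open_point_lower:
  assumes diff: "\<And>t. \<eta> differentiable (at t)" and G: "open G" "x \<in> G"
  shows "- Lambda_fun \<eta> x \<le> liminf (\<lambda>N. Q_fun M S N G)"
proof (cases "Lambda_fun \<eta> x")
  case (real L)
  have bound: "t * x - \<eta> t \<le> L" for t using Lambda_fun_ge[of t x \<eta>] real by simp
  obtain r where "0 < r" and "ball x r \<subseteq> G" using G open_contains_ball by blast
  then have "0 < r / 2" by simp
  then obtain t y where deriv: "(\<eta> has_real_derivative y) (at t)" and "\<bar>y - x\<bar> < r / 2"
    and tilt: "- L \<le> \<eta> t - t * y"
    using exposed_slope_near[OF diff eta_zero bound] by blast
  have "ball y (r / 2) \<subseteq> ball x r"
    using \<open>\<bar>y - x\<bar> < r / 2\<close> abs_less_iff[of "y - x" "r / 2"]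
    by (auto simp: ball_eq_greaterThanLessThan)
  with \<open>ball x r \<subseteq> G\<close> have window: "ball y (r / 2) \<subseteq> G" by blast
  show ?thesis unfolding real
  proof (rule liminf_ge)
    fix c assume "ereal c < - ereal L"
    then have "0 < - L - c" by simp
    have "eventually (\<lambda>N. ereal (\<eta> t - t * y - (- L - c)) \<le> Q_fun M S N G) sequentially"
      using G(1) by (intro slope_window_lower[OF deriv \<open>0 < r / 2\<close> window _ \<open>0 < - L - c\<close>]) simp
    moreover have "c \<le> \<eta> t - t * y - (- L - c)" using tilt by simp
    ultimately show "eventually (\<lambda>N. ereal c \<le> Q_fun M S N G) sequentially"
      by (elim eventually_mono) (meson ereal_less_eq(3) order_trans)
  qed
next
  case MInf
  then show ?thesis using Lambda_fun_nonneg[of \<eta> x] eta_zero by simp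
qed simp

theorem ldp_lower_bound:
  assumes "\<And>t. \<eta> differentiable (at t)" and "open G"
  shows "- (INF x\<in>G. Lambda_fun \<eta> x) \<le> liminf (\<lambda>N. Q_fun M S N G)"
proof -
  have "- liminf (\<lambda>N. Q_fun M S N G) \<le> (INF x\<in>G. Lambda_fun \<eta> x)"
    using open_point_lower[OF assms] by (intro INF_greatest) (simp add: ereal_uminus_le_reorder)
  then show ?thesis by (simp add: ereal_uminus_le_reorder)
qed

end

locale bounded_iid = prob_space M for M :: "'a measure" +
  fixes X :: "nat \<Rightarrow> 'a \<Rightarrow> real" and D :: real
  assumes X_measurable [measurable]: "\<And>n. X n \<in> borel_measurable M"
    and X_indep: "indep_vars (\<lambda>_. borel) X UNIV"
    and X_ident: "\<And>n. distr M borel (X n) = distr M borel (X 0)"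
    and X_bounded: "AE \<omega> in M. \<bar>X 0 \<omega>\<bar> \<le> D"
begin

definition mom :: "nat \<Rightarrow> real" where
  "mom k = (\<integral>\<omega>. X 0 \<omega> ^ k \<partial>M)"

lemma bounded_all: "AE \<omega> in M. \<forall>n. \<bar>X n \<omega>\<bar> \<le> D"
proof -
  have "AE \<omega> in M. \<bar>X n \<omega>\<bar> \<le> D" for n
  proof -
    have "AE z in distr M borel (X 0). \<bar>z\<bar> \<le> D" using X_bounded by (subst AE_distr_iff) auto
    then have "AE z in distr M borel (X n). \<bar>z\<bar> \<le> D" by (simp only: X_ident[of n])
    then show ?thesis by (subst (asm) AE_distr_iff) auto
  qed
  then show ?thesis by (simp add: AE_all_countable)
qed

lemma product_bounded:
  assumes "finite J"
  shows "AE \<omega> in M. \<bar>\<Prod>i\<in>J. X i \<omega>\<bar> \<le> D ^ card J"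
  using bounded_all
proof eventually_elim
  case (elim \<omega>)
  have "\<bar>\<Prod>i\<in>J. X i \<omega>\<bar> = (\<Prod>i\<in>J. \<bar>X i \<omega>\<bar>)" by (simp add: abs_prod)
  also have "\<dots> \<le> (\<Prod>i\<in>J. D)" using elim by (intro prod_mono) auto
  finally show ?case by simp
qed

lemma power_integrable: "integrable M (\<lambda>\<omega>. X n \<omega> ^ k)"
proof (rule integrable_const_bound)
  show "AE \<omega> in M. norm (X n \<omega> ^ k) \<le> D ^ k"
    using bounded_all by eventually_elim (simp add: power_abs power_mono)
qed simp

lemma integral_ident:
  fixes g :: "real \<Rightarrow> real"
  assumes [measurable]: "g \<in> borel_measurable borel"
  shows "(\<integral>\<omega>. g (X n \<omega>) \<partial>M) = (\<integral>\<omega>. g (X 0 \<omega>) \<partial>M)"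
proof -
  have "(\<integral>\<omega>. g (X n \<omega>) \<partial>M) = (\<integral>z. g z \<partial>distr M borel (X n))"
    by (subst Bochner_Integration.integral_distr) auto
  also have "\<dots> = (\<integral>z. g z \<partial>distr M borel (X 0))" by (simp only: X_ident[of n])
  also have "\<dots> = (\<integral>\<omega>. g (X 0 \<omega>) \<partial>M)" by (subst Bochner_Integration.integral_distr) auto
  finally show ?thesis .
qed

lemma integral_prod_indep:
  fixes g :: "nat \<Rightarrow> real \<Rightarrow> real"
  assumes "finite J" and "\<And>i. i \<in> J \<Longrightarrow> g i \<in> borel_measurable borel"
    and "\<And>i. i \<in> J \<Longrightarrow> integrable M (\<lambda>\<omega>. g i (X i \<omega>))"
  shows "(\<integral>\<omega>. (\<Prod>i\<in>J. g i (X i \<omega>)) \<partial>M) = (\<Prod>i\<in>J. \<integral>\<omega>. g i (X i \<omega>) \<partial>M)"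
proof -
  have "indep_vars (\<lambda>_. borel) X J" using indep_vars_subset[OF X_indep] by auto
  then have "indep_vars (\<lambda>_. borel) (\<lambda>i \<omega>. g i (X i \<omega>)) J"
    using assms(2) by (rule indep_vars_compose2) auto
  then show ?thesis using assms by (intro indep_vars_lebesgue_integral) auto
qed

lemma moment_product:
  assumes "finite J"
  shows "(\<integral>\<omega>. (\<Prod>i\<in>J. X i \<omega>) ^ k \<partial>M) = mom k ^ card J"
proof -
  have "(\<integral>\<omega>. (\<Prod>i\<in>J. X i \<omega>) ^ k \<partial>M) = (\<integral>\<omega>. (\<Prod>i\<in>J. X i \<omega> ^ k) \<partial>M)"
    by (simp add: prod_power_distrib)
  also have "\<dots> = (\<Prod>i\<in>J. \<integral>\<omega>. X i \<omega> ^ k \<partial>M)"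
    using assms by (intro integral_prod_indep power_integrable) auto
  also have "\<dots> = (\<Prod>i\<in>J. mom k)"
    unfolding mom_def by (intro prod.cong refl integral_ident) auto
  finally show ?thesis by simp
qed

lemma moment_bound: "\<bar>mom k\<bar> \<le> D ^ k"
proof -
  have "\<bar>mom k\<bar> \<le> (\<integral>\<omega>. \<bar>X 0 \<omega> ^ k\<bar> \<partial>M)" unfolding mom_def by (rule integral_abs_bound)
  also have "\<dots> \<le> (\<integral>\<omega>. D ^ k \<partial>M)"
  proof (rule integral_mono_AE)
    show "integrable M (\<lambda>\<omega>. \<bar>X 0 \<omega> ^ k\<bar>)" by (intro integrable_abs power_integrable)
    show "AE \<omega> in M. \<bar>X 0 \<omega> ^ k\<bar> \<le> D ^ k"
      using bounded_all by eventually_elim (simp add: power_abs power_mono)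
  qed simp
  finally show ?thesis by (simp add: prob_space)
qed

(* The series sum_k t^k/k! (E X^k)^l: the moment generating function of a product of l
   distinct X(i) (integral_exp_product), and exp of the limit eta. *)
definition product_mgf :: "nat \<Rightarrow> real \<Rightarrow> real" where
  "product_mgf l t = (\<Sum>k. t ^ k / fact k * mom k ^ l)"

lemma product_exp_integrable: "finite J \<Longrightarrow> integrable M (\<lambda>\<omega>. exp (t * (\<Prod>i\<in>J. X i \<omega>)))"
  by (rule exp_bounded_integrable[OF _ product_bounded]) auto

lemma integral_exp_product:
  assumes "finite J"
  shows "(\<integral>\<omega>. exp (t * (\<Prod>i\<in>J. X i \<omega>)) \<partial>M) = product_mgf (card J) t"
  using integral_exp_series[OF _ product_bounded[OF assms]] moment_product[OF assms]
  by (simp add: product_mgf_def)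

lemma product_mgf_pos: "0 < product_mgf l t"
  using integral_exp_pos[OF product_exp_integrable[of "{1..l}" t]] integral_exp_product[of "{1..l}" t]
  by simp

(* Jensen: the product of l distinct X(i) has mean (E X)^l. *)
lemma product_mgf_above_mean: "exp (t * mom 1 ^ l) \<le> product_mgf l t"
proof -
  have "integrable M (\<lambda>\<omega>. \<Prod>i\<in>{1..l}. X i \<omega>)"
    using product_bounded[of "{1..l}"] by (intro integrable_const_bound) auto
  moreover have "integrable M (\<lambda>\<omega>. exp (t * (\<Prod>i\<in>{1..l}. X i \<omega>)))"
    by (rule product_exp_integrable) simp
  ultimately have "exp (t * expectation (\<lambda>\<omega>. \<Prod>i\<in>{1..l}. X i \<omega>))
      \<le> (\<integral>\<omega>. exp (t * (\<Prod>i\<in>{1..l}. X i \<omega>)) \<partial>M)"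
    by (rule exp_mean_le_integral_exp)
  then show ?thesis using moment_product[of "{1..l}" 1] integral_exp_product[of "{1..l}" t] by simp
qed

(* The series has coefficients bounded by D^(k l) / k!, so it converges everywhere and is
   differentiable termwise. *)
lemma product_mgf_differentiable: "product_mgf l differentiable (at t)"
proof -
  define c where "c k = mom k ^ l / fact k" for k
  have "summable (\<lambda>n. c n * y ^ n)" for y :: real
  proof (rule summable_comparison_test'[OF summable_exp[of "D ^ l * \<bar>y\<bar>"]])
    fix n :: nat
    have "\<bar>mom n\<bar> ^ l \<le> (D ^ n) ^ l" by (intro power_mono moment_bound) simp
    then have "\<bar>mom n ^ l\<bar> \<le> (D ^ l) ^ n" by (simp add: power_abs power_mult[symmetric] mult.commute)
    then have "\<bar>mom n ^ l\<bar> * \<bar>y\<bar> ^ n \<le> (D ^ l) ^ n * \<bar>y\<bar> ^ n" by (intro mult_right_mono) auto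
    then show "norm (c n * y ^ n) \<le> inverse (fact n) * (D ^ l * \<bar>y\<bar>) ^ n"
      by (simp add: c_def abs_mult power_abs power_mult_distrib divide_inverse_commute divide_right_mono)
  qed
  then have "((\<lambda>x. \<Sum>n. c n * x ^ n) has_real_derivative (\<Sum>n. diffs c n * t ^ n)) (at t)"
    by (intro termdiffs_strong_converges_everywhere) auto
  moreover have "product_mgf l = (\<lambda>x. \<Sum>n. c n * x ^ n)"
    unfolding product_mgf_def c_def fun_eq_iff by (intro allI suminf_cong) simp
  ultimately show ?thesis unfolding real_differentiable_def by auto
qed

lemma eta_fun_eq: "eta_fun M X l t = ln (product_mgf l t)"
  by (simp add: eta_fun_def product_mgf_def mom_def)

lemma eta_fun_differentiable: "eta_fun M X l differentiable (at t)"
proof -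
  obtain d where d: "(product_mgf l has_real_derivative d) (at t)"
    using product_mgf_differentiable by (auto simp: real_differentiable_def)
  have "((\<lambda>t. ln (product_mgf l t)) has_real_derivative (1 / product_mgf l t * d)) (at t)"
    using product_mgf_pos by (intro DERIV_chain2[OF DERIV_ln_divide d]) auto
  then show ?thesis unfolding eta_fun_eq[abs_def] real_differentiable_def by blast
qed

(* eta lies above the line through 0 with slope (E X)^l, the mean needed by ldp_upper_bound. *)
lemma eta_fun_above_mean: "t * mom 1 ^ l \<le> eta_fun M X l t"
  using ln_mono[OF product_mgf_above_mean[of t l]] by (simp add: eta_fun_eq)

end

locale separated_products = bounded_iid M X D for M :: "'a measure" and X D +
  fixes q :: "nat \<Rightarrow> nat \<Rightarrow> nat" and l :: nat and \<gamma> :: real and n0 :: int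
  assumes q_mono: "\<And>j. j \<in> {1..l} \<Longrightarrow> strict_mono (q j)"
    and gamma: "0 < \<gamma>" "\<gamma> < 1"
    and q_sep: "\<And>n j. int n \<ge> n0 \<Longrightarrow> j \<in> {1..<l} \<Longrightarrow>
                  q (Suc j) (nat \<lfloor>real n powr \<gamma>\<rfloor>) > q j n"
begin

(* Indices n >= cutoff N satisfy n >= n0 and are large compared with N^gamma. *)
definition cutoff :: "nat \<Rightarrow> nat" where
  "cutoff N = nat \<lceil>real N powr \<gamma>\<rceil> + nat n0 + 1"

lemma floor_powr_le: "nat \<lfloor>real n powr \<gamma>\<rfloor> \<le> n"
proof (cases "n = 0")
  case False
  then have "real n powr \<gamma> \<le> real n powr 1" using gamma by (intro powr_mono) auto
  then show ?thesis using False by simp linarith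
qed simp

lemma floor_powr_le_cutoff:
  assumes "a \<le> N" and "cutoff N \<le> b"
  shows "nat \<lfloor>real a powr \<gamma>\<rfloor> \<le> b"
proof -
  have "real a powr \<gamma> \<le> real N powr \<gamma>" using assms gamma by (intro powr_mono2) auto
  then have "nat \<lfloor>real a powr \<gamma>\<rfloor> \<le> nat \<lceil>real N powr \<gamma>\<rceil>" by linarith
  then show ?thesis using assms unfolding cutoff_def by linarith
qed

lemma cutoff_above_n0: "cutoff N \<le> n \<Longrightarrow> n0 \<le> int n"
  unfolding cutoff_def by linarith

lemma q_inj: "j \<in> {1..l} \<Longrightarrow> inj (q j)"
  using q_mono strict_mono_imp_inj_on by blast

lemma q_less_higher_index:
  assumes "1 \<le> j" and "Suc j + d \<le> l" and "n0 \<le> int n" "n0 \<le> int m"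
    and "nat \<lfloor>real n powr \<gamma>\<rfloor> \<le> m"
  shows "q j n < q (Suc j + d) m"
  using assms(2)
proof (induction d)
  case 0
  then have "j \<in> {1..<l}" using assms(1) by auto
  then have "q j n < q (Suc j) (nat \<lfloor>real n powr \<gamma>\<rfloor>)" using q_sep assms(3) by blast
  also have "\<dots> \<le> q (Suc j) m"
    using 0 assms(1,5) q_mono[of "Suc j"] by (simp add: strict_mono_less_eq)
  finally show ?case by simp
next
  case (Suc d)
  then have "q j n < q (Suc j + d) m" by simp
  also have "\<dots> < q (Suc (Suc j + d)) (nat \<lfloor>real m powr \<gamma>\<rfloor>)"
    using Suc.prems assms(1,4) by (intro q_sep) auto
  also have "\<dots> \<le> q (Suc (Suc j + d)) m"
    using Suc.prems assms(1) q_mono[of "Suc (Suc j + d)"] floor_powr_le[of m]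
    by (simp add: strict_mono_less_eq)
  finally show ?case by simp
qed

lemma q_collision:
  assumes "cutoff N \<le> n" "n \<le> N" "cutoff N \<le> m" "m \<le> N"
    and "j \<in> {1..l}" "j' \<in> {1..l}" and "q j n = q j' m"
  shows "j = j' \<and> n = m"
proof -
  have "n0 \<le> int n" "n0 \<le> int m" using assms(1,3) by (simp_all add: cutoff_above_n0)
  have "nat \<lfloor>real n powr \<gamma>\<rfloor> \<le> m" "nat \<lfloor>real m powr \<gamma>\<rfloor> \<le> n"
    using assms(1-4) by (simp_all add: floor_powr_le_cutoff)
  consider "j < j'" | "j' < j" | "j = j'" by linarith
  then show ?thesis
  proof cases
    case 1
    then obtain d where "j' = Suc j + d" using less_iff_Suc_add by auto
    then show ?thesis
      using q_less_higher_index[of j d n m] assms(5-7) \<open>n0 \<le> int n\<close> \<open>n0 \<le> int m\<close>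
        \<open>nat \<lfloor>real n powr \<gamma>\<rfloor> \<le> m\<close> by auto
  next
    case 2
    then obtain d where "j = Suc j' + d" using less_iff_Suc_add by auto
    then show ?thesis
      using q_less_higher_index[of j' d m n] assms(5-7) \<open>n0 \<le> int n\<close> \<open>n0 \<le> int m\<close>
        \<open>nat \<lfloor>real m powr \<gamma>\<rfloor> \<le> n\<close> by auto
  next
    case 3
    then show ?thesis using assms(5,7) q_inj by (auto dest: injD)
  qed
qed

definition indices :: "nat \<Rightarrow> nat set" where
  "indices n = (\<lambda>j. q j n) ` {1..l}"

definition isolated :: "nat \<Rightarrow> nat set" where
  "isolated N = {n \<in> {0..N}. inj_on (\<lambda>j. q j n) {1..l}
                    \<and> (\<forall>m\<in>{0..N}. m \<noteq> n \<longrightarrow> indices m \<inter> indices n = {})}"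

definition entangled :: "nat \<Rightarrow> nat set" where
  "entangled N = {0..N} - isolated N"

lemma entangled_subset:
  "entangled N \<subseteq> {..<cutoff N}
     \<union> (\<Union>j\<in>{1..l}. \<Union>j'\<in>{1..l}. \<Union>m\<in>{..<cutoff N}. {n \<in> {0..N}. q j n = q j' m})"
proof
  fix n assume n: "n \<in> entangled N"
  show "n \<in> {..<cutoff N} \<union> (\<Union>j\<in>{1..l}. \<Union>j'\<in>{1..l}. \<Union>m\<in>{..<cutoff N}. {n \<in> {0..N}. q j n = q j' m})"
  proof (cases "n < cutoff N")
    case False
    have "n \<le> N" using n by (simp add: entangled_def)
    have "\<not> inj_on (\<lambda>j. q j n) {1..l} \<or> (\<exists>m\<in>{0..N}. m \<noteq> n \<and> indices m \<inter> indices n \<noteq> {})"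
      using n by (auto simp: entangled_def isolated_def)
    then show ?thesis
    proof
      assume "\<not> inj_on (\<lambda>j. q j n) {1..l}"
      then obtain j j' where "j \<in> {1..l}" "j' \<in> {1..l}" "j \<noteq> j'" "q j n = q j' n"
        unfolding inj_on_def by blast
      then show ?thesis using q_collision[of N n n j j'] False \<open>n \<le> N\<close> by simp
    next
      assume "\<exists>m\<in>{0..N}. m \<noteq> n \<and> indices m \<inter> indices n \<noteq> {}"
      then obtain m j j' where "m \<le> N" "m \<noteq> n" "j \<in> {1..l}" "j' \<in> {1..l}" "q j n = q j' m"
        unfolding indices_def by force
      moreover from this have "m < cutoff N"
        using q_collision[of N n m j j'] False \<open>n \<le> N\<close> by linarith
      ultimately show ?thesis using \<open>n \<le> N\<close> by auto
    qed
  qed simp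
qed

(* Each collision q_j n = q_j' m determines n, so there are O(cutoff N) entangled summands. *)
lemma card_entangled: "card (entangled N) \<le> cutoff N + l * (l * cutoff N)"
proof -
  define C where "C j j' m = {n \<in> {0..N}. q j n = q j' m}" for j j' m
  have "card (C j j' m) \<le> 1" if "j \<in> {1..l}" for j j' m
    using q_inj[OF that] unfolding C_def by (simp add: card_le_Suc0_iff_eq) (metis injD)
  then have "card (\<Union>m\<in>{..<cutoff N}. C j j' m) \<le> cutoff N" if "j \<in> {1..l}" for j j'
    using card_UN_le[of "{..<cutoff N}" "C j j'"] sum_mono[of "{..<cutoff N}" "\<lambda>m. card (C j j' m)" "\<lambda>_. 1"]
      that by fastforce
  then have "card (\<Union>j'\<in>{1..l}. \<Union>m\<in>{..<cutoff N}. C j j' m) \<le> l * cutoff N" if "j \<in> {1..l}" for j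
    using card_UN_le[of "{1..l}" "\<lambda>j'. \<Union>m\<in>{..<cutoff N}. C j j' m"] that
      sum_mono[of "{1..l}" "\<lambda>j'. card (\<Union>m\<in>{..<cutoff N}. C j j' m)" "\<lambda>_. cutoff N"] by fastforce
  then have "card (\<Union>j\<in>{1..l}. \<Union>j'\<in>{1..l}. \<Union>m\<in>{..<cutoff N}. C j j' m) \<le> l * (l * cutoff N)"
    using card_UN_le[of "{1..l}" "\<lambda>j. \<Union>j'\<in>{1..l}. \<Union>m\<in>{..<cutoff N}. C j j' m"]
      sum_mono[of "{1..l}" "\<lambda>j. card (\<Union>j'\<in>{1..l}. \<Union>m\<in>{..<cutoff N}. C j j' m)" "\<lambda>_. l * cutoff N"]
    by fastforce
  moreover have "card (entangled N)
      \<le> card ({..<cutoff N} \<union> (\<Union>j\<in>{1..l}. \<Union>j'\<in>{1..l}. \<Union>m\<in>{..<cutoff N}. C j j' m))"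
    using entangled_subset[of N] unfolding C_def by (intro card_mono) (auto simp: C_def)
  moreover note card_Un_le[of "{..<cutoff N}" "\<Union>j\<in>{1..l}. \<Union>j'\<in>{1..l}. \<Union>m\<in>{..<cutoff N}. C j j' m"]
  ultimately show ?thesis by simp
qed

lemma cutoff_ratio: "(\<lambda>N. real (cutoff N) / real N) \<longlonglongrightarrow> 0"
proof (rule Lim_null_comparison)
  define C where "C = real (nat n0) + 2"
  show "eventually (\<lambda>N. norm (real (cutoff N) / real N) \<le> real N powr (\<gamma> - 1) + C / real N) sequentially"
    using eventually_gt_at_top[of "0::nat"]
  proof eventually_elim
    case (elim N)
    have "0 \<le> \<lceil>real N powr \<gamma>\<rceil>"
      unfolding zero_le_ceiling using powr_ge_zero[of "real N" \<gamma>] by linarith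
    then have "real (nat \<lceil>real N powr \<gamma>\<rceil>) = real_of_int \<lceil>real N powr \<gamma>\<rceil>" by simp
    then have "real (nat \<lceil>real N powr \<gamma>\<rceil>) \<le> real N powr \<gamma> + 1"
      using of_int_ceiling_le_add_one[of "real N powr \<gamma>"] by linarith
    then have "real (cutoff N) \<le> real N powr \<gamma> + C"
      unfolding cutoff_def C_def of_nat_add of_nat_1 by linarith
    then have "real (cutoff N) / real N \<le> (real N powr \<gamma> + C) / real N"
      by (rule divide_right_mono) simp
    also have "\<dots> = real N powr (\<gamma> - 1) + C / real N"
      using elim by (simp add: add_divide_distrib powr_diff)
    finally show ?case by simp
  qed
  have "(\<lambda>N. real N powr (\<gamma> - 1)) \<longlonglongrightarrow> 0"
    using gamma by (intro tendsto_neg_powr filterlim_real_sequentially) auto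
  then show "(\<lambda>N. real N powr (\<gamma> - 1) + C / real N) \<longlonglongrightarrow> 0"
    using tendsto_add[OF _ lim_const_over_n[of C]] by simp
qed

lemma entangled_ratio: "(\<lambda>N. real (card (entangled N)) / real N) \<longlonglongrightarrow> 0"
proof (rule Lim_null_comparison)
  show "eventually (\<lambda>N. norm (real (card (entangled N)) / real N)
          \<le> (1 + real l * real l) * (real (cutoff N) / real N)) sequentially"
  proof (intro always_eventually allI)
    fix N
    have "real (card (entangled N)) \<le> (1 + real l * real l) * real (cutoff N)"
      using card_entangled[of N] by (simp add: algebra_simps flip: of_nat_mult of_nat_add)
    then show "norm (real (card (entangled N)) / real N) \<le> (1 + real l * real l) * (real (cutoff N) / real N)"
      using divide_right_mono[of _ _ "real N"] by simp
  qed
  show "(\<lambda>N. (1 + real l * real l) * (real (cutoff N) / real N)) \<longlonglongrightarrow> 0"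
    using tendsto_mult_right_zero[OF cutoff_ratio] by simp
qed

lemma isolated_ratio: "(\<lambda>N. real (card (isolated N)) / real N) \<longlonglongrightarrow> 1"
proof -
  have "card (isolated N) + card (entangled N) = N + 1" for N
  proof -
    have sub: "isolated N \<subseteq> {0..N}" by (auto simp: isolated_def)
    have "card (entangled N) = card {0..N} - card (isolated N)"
      unfolding entangled_def using sub by (intro card_Diff_subset) (auto intro: finite_subset)
    moreover have "card (isolated N) \<le> card {0..N}" using sub by (intro card_mono) auto
    ultimately show ?thesis by simp
  qed
  then have "real (card (isolated N)) = real N + 1 - real (card (entangled N))" for N
    by (metis add_diff_cancel_right' of_nat_1 of_nat_add)
  then have eq: "1 + 1 / real N - real (card (entangled N)) / real N = real (card (isolated N)) / real N"
    if "0 < N" for N using that by (simp add: diff_divide_distrib add_divide_distrib)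
  have "(\<lambda>N. 1 + 1 / real N - real (card (entangled N)) / real N) \<longlonglongrightarrow> 1"
    using tendsto_diff[OF tendsto_add[OF tendsto_const lim_const_over_n[of 1]] entangled_ratio] by simp
  moreover have "eventually (\<lambda>N. 1 + 1 / real N - real (card (entangled N)) / real N
                                 = real (card (isolated N)) / real N) sequentially"
    using eventually_gt_at_top[of 0] by eventually_elim (rule eq)
  ultimately show ?thesis by (rule Lim_transform_eventually)
qed

definition summand :: "nat \<Rightarrow> 'a \<Rightarrow> real" where
  "summand n \<omega> = (\<Prod>j\<in>{1..l}. X (q j n) \<omega>)"

lemma summand_measurable [measurable]: "summand n \<in> borel_measurable M"
  unfolding summand_def by measurable

lemma summands_bounded:
  assumes "finite A"
  shows "AE \<omega> in M. \<bar>\<Sum>n\<in>A. summand n \<omega>\<bar> \<le> real (card A) * D ^ l"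
  using bounded_all
proof eventually_elim
  case (elim \<omega>)
  have "\<bar>summand n \<omega>\<bar> \<le> D ^ l" for n
  proof -
    have "\<bar>summand n \<omega>\<bar> = (\<Prod>j\<in>{1..l}. \<bar>X (q j n) \<omega>\<bar>)" by (simp add: summand_def abs_prod)
    also have "\<dots> \<le> (\<Prod>j\<in>{1..l}. D)" using elim by (intro prod_mono) auto
    finally show ?thesis by simp
  qed
  then have "(\<Sum>n\<in>A. \<bar>summand n \<omega>\<bar>) \<le> real (card A) * D ^ l"
    using sum_mono[of A "\<lambda>n. \<bar>summand n \<omega>\<bar>" "\<lambda>_. D ^ l"] by simp
  then show ?case using sum_abs[of "\<lambda>n. summand n \<omega>" A] by linarith
qed

lemma S_sum_split:
  "S_sum q l X N \<omega> = (\<Sum>n\<in>isolated N. summand n \<omega>) + (\<Sum>n\<in>entangled N. summand n \<omega>)"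
proof -
  have "isolated N \<subseteq> {0..N}" by (auto simp: isolated_def)
  then show ?thesis
    unfolding S_sum_def summand_def[symmetric] entangled_def
    by (subst sum.subset_diff[of "isolated N"]) auto
qed

lemma S_sum_measurable [measurable]: "S_sum q l X N \<in> borel_measurable M"
  unfolding S_sum_def by measurable

lemma S_sum_exp_integrable: "integrable M (\<lambda>\<omega>. exp (t * S_sum q l X N \<omega>))"
  using summands_bounded[of "{0..N}"]
  by (intro exp_bounded_integrable) (simp_all add: S_sum_def summand_def)

(* Isolated summands depend on disjoint blocks of the independent X(i), hence are independent. *)
lemma isolated_indep: "indep_vars (\<lambda>_. borel) (\<lambda>n \<omega>. exp (t * summand n \<omega>)) (isolated N)"
proof -
  have "disjoint_family_on indices (isolated N)"
    unfolding disjoint_family_on_def isolated_def by auto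
  then have "indep_vars (\<lambda>n. PiM (indices n) (\<lambda>_. borel)) (\<lambda>n \<omega>. restrict (\<lambda>i. X i \<omega>) (indices n))
      (isolated N)"
    by (intro indep_vars_restrict[OF X_indep]) auto
  moreover have "(\<lambda>x. exp (t * (\<Prod>j\<in>{1..l}. x (q j n)))) \<in> borel_measurable (PiM (indices n) (\<lambda>_. borel))"
    for n unfolding indices_def by measurable
  ultimately have "indep_vars (\<lambda>_. borel)
      (\<lambda>n \<omega>. exp (t * (\<Prod>j\<in>{1..l}. restrict (\<lambda>i. X i \<omega>) (indices n) (q j n)))) (isolated N)"
    by (rule indep_vars_compose2)
  then show ?thesis by (simp add: summand_def indices_def)
qed

lemma isolated_integral:
  "(\<integral>\<omega>. exp (t * (\<Sum>n\<in>isolated N. summand n \<omega>)) \<partial>M) = product_mgf l t ^ card (isolated N)"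
proof -
  have fin: "finite (isolated N)" by (simp add: isolated_def)
  have factor: "(\<integral>\<omega>. exp (t * summand n \<omega>) \<partial>M) = product_mgf l t" if "n \<in> isolated N" for n
  proof -
    have inj: "inj_on (\<lambda>j. q j n) {1..l}" using that by (simp add: isolated_def)
    then have "summand n \<omega> = (\<Prod>i\<in>indices n. X i \<omega>)" for \<omega>
      by (simp add: summand_def indices_def prod.reindex)
    moreover have "card (indices n) = l" using card_image[OF inj] by (simp add: indices_def)
    ultimately show ?thesis using integral_exp_product[of "indices n" t] by (simp add: indices_def)
  qed
  have integrable: "integrable M (\<lambda>\<omega>. exp (t * summand n \<omega>))" for n
    using summands_bounded[of "{n}"] by (intro exp_bounded_integrable) auto
  have "(\<integral>\<omega>. exp (t * (\<Sum>n\<in>isolated N. summand n \<omega>)) \<partial>M)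
      = (\<integral>\<omega>. (\<Prod>n\<in>isolated N. exp (t * summand n \<omega>)) \<partial>M)"
    by (simp add: sum_distrib_left exp_sum fin)
  also have "\<dots> = (\<Prod>n\<in>isolated N. \<integral>\<omega>. exp (t * summand n \<omega>) \<partial>M)"
    by (rule indep_vars_lebesgue_integral[OF fin isolated_indep integrable])
  also have "\<dots> = product_mgf l t ^ card (isolated N)" by (simp add: factor)
  finally show ?thesis .
qed

lemma mgf_S_bounds:
  fixes N :: nat and t :: real
  defines "c \<equiv> \<bar>t\<bar> * (real (card (entangled N)) * D ^ l)"
  shows "exp (- c) * product_mgf l t ^ card (isolated N) \<le> mgf_S M q l X N t"
    and "mgf_S M q l X N t \<le> exp c * product_mgf l t ^ card (isolated N)"
proof -
  have "AE \<omega> in M. \<bar>t * (\<Sum>n\<in>entangled N. summand n \<omega>)\<bar> \<le> c"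
    using summands_bounded[of "entangled N"] unfolding c_def
    by (auto simp: entangled_def abs_mult intro: mult_left_mono elim!: eventually_mono)
  moreover have "integrable M (\<lambda>\<omega>. exp (t * (\<Sum>n\<in>isolated N. summand n \<omega>)))"
    using summands_bounded[of "isolated N"] by (intro exp_bounded_integrable) (auto simp: isolated_def)
  moreover have "exp (t * (\<Sum>n\<in>isolated N. summand n \<omega>) + t * (\<Sum>n\<in>entangled N. summand n \<omega>))
      = exp (t * S_sum q l X N \<omega>)" for \<omega>
    by (simp add: S_sum_split distrib_left)
  ultimately show "exp (- c) * product_mgf l t ^ card (isolated N) \<le> mgf_S M q l X N t"
    and "mgf_S M q l X N t \<le> exp c * product_mgf l t ^ card (isolated N)"
    using integral_exp_perturbed[of "\<lambda>\<omega>. t * (\<Sum>n\<in>isolated N. summand n \<omega>)"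
        "\<lambda>\<omega>. t * (\<Sum>n\<in>entangled N. summand n \<omega>)" c]
    by (simp_all add: isolated_integral mgf_S_def S_sum_exp_integrable)
qed

theorem mgf_S_limit: "(\<lambda>N. ln (mgf_S M q l X N t) / real N) \<longlonglongrightarrow> eta_fun M X l t"
proof -
  define c where "c N = \<bar>t\<bar> * (real (card (entangled N)) * D ^ l)" for N
  have "(\<lambda>N. \<bar>t\<bar> * D ^ l * (real (card (entangled N)) / real N)) \<longlonglongrightarrow> 0"
    using tendsto_mult_right_zero[OF entangled_ratio] by simp
  then have "(\<lambda>N. c N / real N) \<longlonglongrightarrow> 0" by (simp add: c_def algebra_simps)
  then show ?thesis
    unfolding eta_fun_eq using product_mgf_pos mgf_S_bounds isolated_ratio
    by (intro ln_sandwich_limit[where c = c and g = "\<lambda>N. card (isolated N)"]) (auto simp: c_def)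
qed

end

theorem mainTheorem15:
  fixes M :: "'a measure" and X :: "nat \<Rightarrow> 'a \<Rightarrow> real" and D :: real
    and q :: "nat \<Rightarrow> nat \<Rightarrow> nat" and l :: nat and \<gamma> :: real and n0 :: int
  assumes "prob_space M"
    and rv: "\<And>n. X n \<in> borel_measurable M"
    and indep: "prob_space.indep_vars M (\<lambda>_. borel) X UNIV"
    and ident: "\<And>n. distr M borel (X n) = distr M borel (X 0)"
    and bdd: "AE \<omega> in M. \<bar>X 0 \<omega>\<bar> \<le> D"
    and l_pos: "l \<ge> 1"
    and q_mono: "\<And>j. j \<in> {1..l} \<Longrightarrow> strict_mono (q j)"
    and gamma: "0 < \<gamma>" "\<gamma> < 1"
    and q_sep: "\<And>n j. int n \<ge> n0 \<Longrightarrow> j \<in> {1..<l} \<Longrightarrow>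
                   q (Suc j) (nat \<lfloor>real n powr \<gamma>\<rfloor>) > q j n"
  shows "(\<forall>t. (\<lambda>N. ln (mgf_S M q l X N t) / real N) \<longlonglongrightarrow> eta_fun M X l t)
       \<and> (\<forall>t. eta_fun M X l differentiable (at t))
       \<and> (\<forall>F. closed F \<longrightarrow>
            limsup (\<lambda>N. Q_fun M (S_sum q l X) N F)
              \<le> - (INF x\<in>F. Lambda_fun (eta_fun M X l) x))
       \<and> (\<forall>G. open G \<longrightarrow>
            liminf (\<lambda>N. Q_fun M (S_sum q l X) N G)
              \<ge> - (INF x\<in>G. Lambda_fun (eta_fun M X l) x))"
proof -
  interpret separated_products M X D q l \<gamma> n0
    by (intro separated_products.intro bounded_iid.intro separated_products_axioms.intro
          bounded_iid_axioms.intro) (use assms in auto)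
  interpret gartner_ellis M "S_sum q l X" "eta_fun M X l"
    by (intro gartner_ellis.intro gartner_ellis_axioms.intro \<open>prob_space M\<close> S_sum_measurable
          S_sum_exp_integrable) (use mgf_S_limit in \<open>simp add: mgf_S_def\<close>)
  show ?thesis
  proof (intro conjI allI impI)
    show "(\<lambda>N. ln (mgf_S M q l X N t) / real N) \<longlonglongrightarrow> eta_fun M X l t" for t
      by (rule mgf_S_limit)
    show "eta_fun M X l differentiable (at t)" for t
      by (rule eta_fun_differentiable)
    show "limsup (\<lambda>N. Q_fun M (S_sum q l X) N F) \<le> - (INF x\<in>F. Lambda_fun (eta_fun M X l) x)"
      if "closed F" for F
      by (rule ldp_upper_bound[OF eta_fun_above_mean that])
    show "- (INF x\<in>G. Lambda_fun (eta_fun M X l) x) \<le> liminf (\<lambda>N. Q_fun M (S_sum q l X) N G)"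
      if "open G" for G
      by (rule ldp_lower_bound[OF eta_fun_differentiable that])
  qed
qed

end
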